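(* For every $l\in\mathbb N$, the closure of the complex curve $\Gamma_l=\{P_l(\lambda,\mu^2)=0\}$ in $\mathbb{CP}^2\supset\mathbb C^2_{(\lambda,\mu)}$ intersects the line at infinity exactly at the points $(\lambda:\mu:0)$ with $\lambda/\mu\in\{l-1,l-3,\dots,-(l-1)\}$; that is, the asymptotic directions of the branches of $\Gamma_l$ at infinity correspond to the ratios $\lambda/\mu=l-1,l-3,\dots,-(l-1)$. In particular, the closure of $\Gamma_l$ does not contain the point of intersection of the $\lambda$-axis with the line at infinity.
   Context: For $l\in\mathbb N$ and $\mu\in\mathbb C$, $H_l$ is the tridiagonal $l\times l$ matrix with entries $H_{l;jj}=(1-j)(l-j+1)$, $H_{l;j,j+1}=\mu j$, $H_{l;j,j-1}=\mu(l-j+1)$, and $H_{l;ij}=0$ if $|i-j|\geq 2$; $\det(H_l+\lambda\,\mathrm{Id})$ is a polynomial of degree $l$ in $(\lambda,\mu^2)$, written $P_l(\lambda,\mu^2)$. *)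

theory Defs
  imports "Jordan_Normal_Form.Determinant"
begin

text \<open>Entries of the tridiagonal matrix H_l (1-based indices i, j in 1..l).\<close>
definition H_entry :: "nat \<Rightarrow> complex \<Rightarrow> nat \<Rightarrow> nat \<Rightarrow> complex" where
  "H_entry l \<mu> i j =
     (if i = j then (1 - of_nat j) * (of_nat l - of_nat j + 1)
      else if j = i + 1 then \<mu> * of_nat i
      else if i = j + 1 then \<mu> * (of_nat l - of_nat i + 1)
      else 0)"

text \<open>H_l as an l x l matrix (JNF matrices are 0-based, hence the shift).\<close>
definition H_mat :: "nat \<Rightarrow> complex \<Rightarrow> complex mat" where
  "H_mat l \<mu> = mat l l (\<lambda>(i, j). H_entry l \<mu> (i + 1) (j + 1))"

text \<open>P_l(lambda, mu^2) = det(H_l + lambda Id); the affine curve Gamma_l in C^2.\<close>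
definition Gamma :: "nat \<Rightarrow> (complex \<times> complex) set" where
  "Gamma l = {(lam, mu). det (H_mat l mu + lam \<cdot>\<^sub>m 1\<^sub>m l) = 0}"

text \<open>The point (a:b:0) of the line at infinity of CP^2 lies in the closure of an affine
  set S in C^2: there is a sequence in S escaping to infinity whose direction tends to
  the complex line C(a,b).\<close>
definition in_closure_at_infinity :: "(complex \<times> complex) set \<Rightarrow> complex \<Rightarrow> complex \<Rightarrow> bool" where
  "in_closure_at_infinity S a b \<longleftrightarrow>
     (\<exists>x :: nat \<Rightarrow> complex \<times> complex.
        (\<forall>n. x n \<in> S) \<and>
        filterlim (\<lambda>n. cmod (fst (x n)) + cmod (snd (x n))) at_top sequentially \<and>
        ((\<lambda>n. (a * snd (x n) - b * fst (x n)) / of_real (cmod (fst (x n)) + cmod (snd (x n))))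
           \<longlonglongrightarrow> 0))"

end

theory Submission
  imports Defs "Jordan_Normal_Form.Char_Poly"
begin

(* Write H_l = H_l(0) + mu K with H_l(0) diagonal and K the Sylvester-Kac matrix, whose
   eigenvalues are l-1, l-3, ..., 1-l. Then det(H_l + lambda) differs from the leading form
   F(lambda, mu) = prod_k (lambda - (l-1-2k) mu) by O((|lambda| + |mu|)^(l-1)). If points of
   Gamma_l escape to infinity in direction (a:b) with F(a, b) /= 0, every factor of F grows
   linearly along them, contradicting this bound. Conversely, if F(c, 1) = 0, then for
   mu = 1, 2, ... some root lambda of det(H_l + lambda) satisfies
   |lambda - c mu|^l <= |det(H_l + c mu)| = O(mu^(l-1)), so these points of Gamma_l
   approach the direction (c:1). *)

section \<open>Roots of det (A + t I)\<close>

lemma det_add_scalar_factorization: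
  fixes A :: "complex mat"
  assumes A: "A \<in> carrier_mat n n"
  shows "\<exists>rs. length rs = n \<and> (\<forall>t. det (A + t \<cdot>\<^sub>m 1\<^sub>m n) = (\<Prod>r\<leftarrow>rs. t - r))"
proof -
  have mA: "- A \<in> carrier_mat n n" using A by simp
  obtain rs where cp: "char_poly (- A) = (\<Prod>r\<leftarrow>rs. [:- r, 1:])" and len: "length rs = n"
    using char_poly_factorized[OF mA] by blast
  have "det (A + t \<cdot>\<^sub>m 1\<^sub>m n) = (\<Prod>r\<leftarrow>rs. t - r)" for t
  proof -
    have "A + t \<cdot>\<^sub>m 1\<^sub>m n = - char_matrix (- A) t"
      using A by (intro eq_matI) (auto simp: char_matrix_def)
    then have "det (A + t \<cdot>\<^sub>m 1\<^sub>m n) = poly (char_poly (- A)) t"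
      using char_poly_matrix[OF mA, of t] by simp
    also have "\<dots> = (\<Prod>r\<leftarrow>rs. t - r)"
      unfolding cp by (induct rs) (auto simp: algebra_simps)
    finally show ?thesis .
  qed
  with len show ?thesis by blast
qed

lemma det_add_scalar_eq_prod_roots:
  fixes A :: "complex mat" and c :: "nat \<Rightarrow> complex"
  assumes A: "A \<in> carrier_mat n n" and inj: "inj_on c {..<n}"
    and roots: "\<And>k. k < n \<Longrightarrow> det (A + c k \<cdot>\<^sub>m 1\<^sub>m n) = 0"
  shows "det (A + t \<cdot>\<^sub>m 1\<^sub>m n) = (\<Prod>k<n. t - c k)"
proof -
  obtain rs where len: "length rs = n" and det: "\<And>t. det (A + t \<cdot>\<^sub>m 1\<^sub>m n) = (\<Prod>r\<leftarrow>rs. t - r)"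
    using det_add_scalar_factorization[OF A] by blast
  have "c k \<in> set rs" if "k < n" for k
  proof -
    have "0 \<in> (\<lambda>r. c k - r) ` set rs"
      using roots[OF that] by (simp add: det)
    then show ?thesis
      by auto
  qed
  then have sub: "c ` {..<n} \<subseteq> set rs"
    by auto
  have card: "card (c ` {..<n}) = n"
    using card_image[OF inj] by simp
  have set_rs: "set rs = c ` {..<n}"
    using card_seteq[OF List.finite_set sub] card_length[of rs] len card by simp
  then have "distinct rs"
    using card len by (intro card_distinct) simp
  then have "(\<Prod>r\<leftarrow>rs. t - r) = (\<Prod>r\<in>c ` {..<n}. t - r)"
    by (simp add: prod.distinct_set_conv_list[symmetric] set_rs)
  also have "\<dots> = (\<Prod>k<n. t - c k)"
    using inj by (simp add: prod.reindex)
  finally show ?thesis by (simp add: det)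
qed

lemma exists_root_det_add_scalar_near:
  fixes A :: "complex mat"
  assumes A: "A \<in> carrier_mat n n" and "0 < n"
  obtains r where "det (A + r \<cdot>\<^sub>m 1\<^sub>m n) = 0" and "norm (t - r) ^ n \<le> norm (det (A + t \<cdot>\<^sub>m 1\<^sub>m n))"
proof -
  obtain rs where len: "length rs = n" and det: "\<And>t. det (A + t \<cdot>\<^sub>m 1\<^sub>m n) = (\<Prod>r\<leftarrow>rs. t - r)"
    using det_add_scalar_factorization[OF A] by blast
  have "set rs \<noteq> {}" using \<open>0 < n\<close> len by auto
  then obtain r where r: "r \<in> set rs" and min: "Min ((\<lambda>r. norm (t - r)) ` set rs) = norm (t - r)"
    by (rule obtains_MIN[OF List.finite_set])
  have closest: "norm (t - r) \<le> norm (t - r')" if "r' \<in> set rs" for r'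
    unfolding min[symmetric] using that by (intro Min_le) auto
  have "norm (t - r) ^ n = (\<Prod>i=0..<n. norm (t - r))" by simp
  also have "\<dots> \<le> (\<Prod>i=0..<n. norm (t - rs ! i))"
    using closest len by (intro prod_mono) auto
  also have "\<dots> = norm (det (A + t \<cdot>\<^sub>m 1\<^sub>m n))"
    by (simp add: det prod.list_conv_set_nth len prod_norm)
  finally have "norm (t - r) ^ n \<le> norm (det (A + t \<cdot>\<^sub>m 1\<^sub>m n))" .
  moreover have "det (A + r \<cdot>\<^sub>m 1\<^sub>m n) = 0"
    unfolding det using r by (auto intro: rev_image_eqI)
  ultimately show ?thesis
    by (rule that[rotated])
qed

section \<open>The Sylvester-Kac matrix\<close>

definition kac_mat :: "nat \<Rightarrow> complex mat" where
  "kac_mat l = mat l l (\<lambda>(i, j).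
     if j = i + 1 then of_nat (i + 1) else if i = j + 1 then of_nat l - of_nat i else 0)"

definition kac_eig :: "nat \<Rightarrow> nat \<Rightarrow> complex" where
  "kac_eig l k = of_int (int l - 1 - 2 * int k)"

lemma kac_mat_carrier [simp]: "kac_mat l \<in> carrier_mat l l"
  by (simp add: kac_mat_def)

lemma kac_mat_dim [simp]: "dim_row (kac_mat l) = l" "dim_col (kac_mat l) = l"
  by (simp_all add: kac_mat_def)

(* Read coefficientwise, this identity says that the coefficient vector of p is an
   eigenvector of the Kac matrix. *)
lemma kac_poly_ode:
  fixes m q :: nat
  defines "p \<equiv> [:1, 1:] ^ m * [:1, -1:] ^ q :: complex poly"
  shows "[:1, 0, -1:] * pderiv p + smult (of_nat (m + q)) ([:0, 1:] * p) = smult (of_nat m - of_nat q) p"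
proof -
  define a b x :: "complex poly" where "a = [:1, 1:]" and "b = [:1, -1:]" and "x = [:0, 1:]"
  have power_pred: "smult (of_nat k) (r * r ^ (k - 1)) = smult (of_nat k) (r ^ k)" for k and r :: "complex poly"
    by (cases k) simp_all
  have p_ab: "p = a ^ m * b ^ q"
    by (simp add: p_def a_def b_def)
  have pderiv_p: "pderiv p = smult (of_nat m) (a ^ (m - 1)) * b ^ q - a ^ m * smult (of_nat q) (b ^ (q - 1))"
    unfolding p_def a_def b_def pderiv_mult pderiv_power by (simp add: pderiv_pCons algebra_simps)
  have ab: "[:1, 0, -1:] = a * b"
    by (simp add: a_def b_def)
  have "[:1, 0, -1:] * pderiv p = a * b * pderiv p"
    unfolding ab ..
  also have "\<dots> = smult (of_nat m) (a * a ^ (m - 1)) * b ^ q * b - a ^ m * a * smult (of_nat q) (b * b ^ (q - 1))"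
    unfolding pderiv_p by (simp add: algebra_simps)
  also have "\<dots> = smult (of_nat m) (b * p) - smult (of_nat q) (a * p)"
    unfolding power_pred p_ab by (simp add: algebra_simps)
  finally have deriv_part: "[:1, 0, -1:] * pderiv p = smult (of_nat m) (b * p) - smult (of_nat q) (a * p)" .
  have "[:1, 0, -1:] * pderiv p + smult (of_nat (m + q)) (x * p)
      = (smult (of_nat m) b - smult (of_nat q) a + smult (of_nat (m + q)) x) * p"
    unfolding deriv_part by (simp add: algebra_simps)
  also have "smult (of_nat m) b - smult (of_nat q) a + smult (of_nat (m + q)) x = [:of_nat m - of_nat q:]"
    by (simp add: a_def b_def x_def)
  also have "[:of_nat m - of_nat q:] * p = smult (of_nat m - of_nat q) p"
    by simp
  finally show ?thesis
    unfolding x_def .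
qed

lemma kac_poly_coeff_recurrence:
  fixes m q :: nat
  defines "p \<equiv> [:1, 1:] ^ m * [:1, -1:] ^ q :: complex poly"
  shows "of_nat (i + 1) * coeff p (i + 1)
           + (if 0 < i then (of_nat (m + q + 1) - of_nat i) * coeff p (i - 1) else 0)
         = (of_nat m - of_nat q) * coeff p i"
proof -
  have "coeff ([:1, 0, -1:] * pderiv p + smult (of_nat (m + q)) ([:0, 1:] * p)) i
      = coeff (smult (of_nat m - of_nat q) p) i"
    unfolding p_def kac_poly_ode ..
  then show ?thesis
    by (cases i; cases "i - 1") (auto simp: coeff_pderiv coeff_pCons algebra_simps)
qed

lemma kac_mat_mult_coeff_vec:
  assumes kl: "k < l"
  defines "p \<equiv> [:1, 1:] ^ k * [:1, -1:] ^ (l - 1 - k) :: complex poly"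
  shows "kac_mat l *\<^sub>v vec l (coeff p) = (- kac_eig l k) \<cdot>\<^sub>v vec l (coeff p)"
proof (rule eq_vecI)
  fix i assume "i < dim_vec ((- kac_eig l k) \<cdot>\<^sub>v vec l (coeff p))"
  then have il: "i < l" by simp
  have "degree p \<le> k + (l - 1 - k)"
    unfolding p_def by (intro degree_mult_le[THEN order_trans] add_mono degree_power_le[THEN order_trans]) auto
  then have top: "coeff p (i + 1) = 0" if "\<not> i + 1 < l"
    using that kl il by (intro coeff_eq_0) auto
  have "(kac_mat l *\<^sub>v vec l (coeff p)) $ i
      = (\<Sum>j<l. (if j = i + 1 then of_nat (i + 1) * coeff p j else 0))
        + (\<Sum>j<l. (if j = i - 1 \<and> 0 < i then (of_nat l - of_nat i) * coeff p j else 0))"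
    using il unfolding sum.distrib[symmetric]
    by (auto simp: kac_mat_def scalar_prod_def atLeast0LessThan intro!: sum.cong)
  also have "\<dots> = of_nat (i + 1) * coeff p (i + 1)
                  + (if 0 < i then (of_nat l - of_nat i) * coeff p (i - 1) else 0)"
    using il top by (cases "i + 1 < l") auto
  also have "\<dots> = (of_nat k - of_nat (l - 1 - k)) * coeff p i"
  proof -
    have l: "k + (l - 1 - k) + 1 = l"
      using kl by simp
    show ?thesis
      using kac_poly_coeff_recurrence[of i k "l - 1 - k", unfolded l] unfolding p_def .
  qed
  also have "\<dots> = ((- kac_eig l k) \<cdot>\<^sub>v vec l (coeff p)) $ i"
  proof -
    have "- kac_eig l k = of_nat k - of_nat (l - 1 - k)"
      using kl by (simp add: kac_eig_def)
    then show ?thesis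
      using il by simp
  qed
  finally show "(kac_mat l *\<^sub>v vec l (coeff p)) $ i = ((- kac_eig l k) \<cdot>\<^sub>v vec l (coeff p)) $ i" .
qed simp

lemma det_kac_mat_add_kac_eig:
  assumes kl: "k < l"
  shows "det (kac_mat l + kac_eig l k \<cdot>\<^sub>m 1\<^sub>m l) = 0"
proof -
  define v where "v = vec l (coeff ([:1, 1:] ^ k * [:1, -1:] ^ (l - 1 - k) :: complex poly))"
  have "v $ 0 = 1"
    using kl by (simp add: v_def poly_0_coeff_0[symmetric])
  moreover have "0\<^sub>v l $ 0 = (0 :: complex)"
    using kl by simp
  ultimately have "v \<noteq> 0\<^sub>v l"
    by auto
  then have "eigenvalue (kac_mat l) (- kac_eig l k)"
    using kac_mat_mult_coeff_vec[OF kl]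
    unfolding eigenvalue_def eigenvector_def by (intro exI[of _ v]) (simp add: v_def)
  then show ?thesis
    by (simp add: eigenvalue_det[OF kac_mat_carrier] char_matrix_def)
qed

lemma det_kac_mat_add_scalar: "det (kac_mat l + t \<cdot>\<^sub>m 1\<^sub>m l) = (\<Prod>k<l. t - kac_eig l k)"
  by (rule det_add_scalar_eq_prod_roots[OF kac_mat_carrier _ det_kac_mat_add_kac_eig])
    (auto simp: inj_on_def kac_eig_def)

lemma det_scalar_add_smult_kac_mat:
  "det (lam \<cdot>\<^sub>m 1\<^sub>m l + mu \<cdot>\<^sub>m kac_mat l) = (\<Prod>k<l. lam - kac_eig l k * mu)"
proof (cases "mu = 0")
  case True
  then have "lam \<cdot>\<^sub>m 1\<^sub>m l + mu \<cdot>\<^sub>m kac_mat l = lam \<cdot>\<^sub>m 1\<^sub>m l"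
    by (intro eq_matI) (auto simp: kac_mat_def)
  then show ?thesis
    using True by simp
next
  case False
  have "lam \<cdot>\<^sub>m 1\<^sub>m l + mu \<cdot>\<^sub>m kac_mat l = mu \<cdot>\<^sub>m (kac_mat l + (lam / mu) \<cdot>\<^sub>m 1\<^sub>m l)"
    using False by (intro eq_matI) (auto simp: kac_mat_def algebra_simps)
  then have "det (lam \<cdot>\<^sub>m 1\<^sub>m l + mu \<cdot>\<^sub>m kac_mat l) = (\<Prod>k<l. mu * (lam / mu - kac_eig l k))"
    by (simp add: det_kac_mat_add_scalar prod.distrib)
  also have "\<dots> = (\<Prod>k<l. lam - kac_eig l k * mu)"
    using False by (intro prod.cong) (auto simp: field_simps)
  finally show ?thesis .
qed

section \<open>Perturbation of determinants\<close>

lemma norm_prod_add_diff_le: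
  fixes x d :: "nat \<Rightarrow> 'a :: real_normed_field"
  assumes "\<And>i. i < n \<Longrightarrow> norm (x i) \<le> M" and "\<And>i. i < n \<Longrightarrow> norm (d i) \<le> K"
  shows "norm ((\<Prod>i=0..<n. x i + d i) - (\<Prod>i=0..<n. x i)) \<le> of_nat n * K * (M + K) ^ (n - 1)"
  using assms
proof (induction n)
  case 0
  then show ?case by simp
next
  case (Suc n)
  define A B where "A = (\<Prod>i=0..<n. x i + d i)" and "B = (\<Prod>i=0..<n. x i)"
  have xn: "norm (x n) \<le> M" and dn: "norm (d n) \<le> K"
    using Suc.prems by auto
  then have M: "0 \<le> M" and K: "0 \<le> K"
    using norm_ge_zero order_trans by blast+
  have IH: "norm (A - B) \<le> of_nat n * K * (M + K) ^ (n - 1)"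
    unfolding A_def B_def using Suc by auto
  have "norm B \<le> (\<Prod>i=0..<n. M)"
    unfolding B_def prod_norm[symmetric] using Suc.prems by (intro prod_mono) auto
  also have "\<dots> \<le> (M + K) ^ n"
    using M K by (simp add: power_mono)
  finally have nB: "norm B \<le> (M + K) ^ n" .
  have "norm ((\<Prod>i=0..<Suc n. x i + d i) - (\<Prod>i=0..<Suc n. x i)) = norm ((x n + d n) * (A - B) + d n * B)"
    unfolding A_def B_def by (simp add: algebra_simps)
  also have "\<dots> \<le> norm (x n + d n) * norm (A - B) + norm (d n) * norm B"
    by (metis norm_mult norm_triangle_ineq)
  also have "\<dots> \<le> (M + K) * (of_nat n * K * (M + K) ^ (n - 1)) + K * (M + K) ^ n"
    using xn dn IH nB M K norm_triangle_ineq[of "x n" "d n"]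
    by (intro add_mono mult_mono) auto
  also have "\<dots> = of_nat (Suc n) * K * (M + K) ^ (Suc n - 1)"
    by (cases n) (simp_all add: algebra_simps)
  finally show ?case .
qed

lemma norm_det_add_diff_le:
  fixes X D :: "'a :: real_normed_field mat"
  assumes X: "X \<in> carrier_mat n n" and D: "D \<in> carrier_mat n n"
    and bound_X: "\<And>i j. i < n \<Longrightarrow> j < n \<Longrightarrow> norm (X $$ (i, j)) \<le> M"
    and bound_D: "\<And>i j. i < n \<Longrightarrow> j < n \<Longrightarrow> norm (D $$ (i, j)) \<le> K"
  shows "norm (det (X + D) - det X) \<le> fact n * (of_nat n * K * (M + K) ^ (n - 1))"
proof -
  let ?P = "{p. p permutes {0..<n}}"
  let ?term = "\<lambda>p. signof p * ((\<Prod>i=0..<n. X $$ (i, p i) + D $$ (i, p i)) - (\<Prod>i=0..<n. X $$ (i, p i)))"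
  have perm_lt: "p i < n" if "p \<in> ?P" "i < n" for p i
    using that by (auto dest: permutes_in_image)
  have XD: "X + D \<in> carrier_mat n n"
    using X D by simp
  have "det (X + D) = (\<Sum>p\<in>?P. signof p * (\<Prod>i=0..<n. X $$ (i, p i) + D $$ (i, p i)))"
    unfolding det_def'[OF XD] using X D perm_lt by (intro sum.cong refl arg_cong2[where f = times] prod.cong) auto
  then have "det (X + D) - det X = (\<Sum>p\<in>?P. ?term p)"
    unfolding det_def'[OF X] by (simp add: sum_subtractf algebra_simps)
  then have "norm (det (X + D) - det X) \<le> (\<Sum>p\<in>?P. norm (?term p))"
    by (simp add: norm_sum)
  also have "\<dots> \<le> (\<Sum>p\<in>?P. of_nat n * K * (M + K) ^ (n - 1))"
  proof (rule sum_mono)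
    fix p assume "p \<in> ?P"
    then have "norm ((\<Prod>i=0..<n. X $$ (i, p i) + D $$ (i, p i)) - (\<Prod>i=0..<n. X $$ (i, p i)))
        \<le> of_nat n * K * (M + K) ^ (n - 1)"
      using perm_lt bound_X bound_D by (intro norm_prod_add_diff_le) auto
    then show "norm (?term p) \<le> of_nat n * K * (M + K) ^ (n - 1)"
      by (simp add: norm_mult sign_def)
  qed
  also have "\<dots> = fact n * (of_nat n * K * (M + K) ^ (n - 1))"
    using card_permutations[of "{0..<n}" n] by simp
  finally show ?thesis .
qed

section \<open>The curve Gamma_l near the line at infinity\<close>

lemma H_mat_carrier [simp]: "H_mat l mu \<in> carrier_mat l l"
  by (simp add: H_mat_def)

lemma H_mat_add_scalar_eq: "H_mat l mu + lam \<cdot>\<^sub>m 1\<^sub>m l = (lam \<cdot>\<^sub>m 1\<^sub>m l + mu \<cdot>\<^sub>m kac_mat l) + H_mat l 0"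
  by (rule eq_matI) (auto simp: H_mat_def H_entry_def kac_mat_def algebra_simps)

lemma norm_kac_mat_entry_le:
  assumes "i < l" "j < l"
  shows "norm (kac_mat l $$ (i, j)) \<le> real l"
proof -
  have "norm (of_nat l - of_nat i :: complex) = real (l - i)"
    using assms by (simp add: of_nat_diff[symmetric] del: of_nat_diff)
  moreover have "norm (of_nat (i + 1) :: complex) = real (i + 1)"
    by (rule norm_of_nat)
  ultimately show ?thesis
    using assms by (auto simp: kac_mat_def)
qed

lemma norm_H_mat_0_entry_le:
  assumes "i < l" "j < l"
  shows "norm (H_mat l 0 $$ (i, j)) \<le> real l ^ 2"
proof (cases "i = j")
  case True
  then have "H_mat l 0 $$ (i, j) = - of_nat (j * (l - j))"
    using assms by (simp add: H_mat_def H_entry_def algebra_simps)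
  then have "norm (H_mat l 0 $$ (i, j)) = real (j * (l - j))"
    by (simp only: norm_minus_cancel norm_of_nat)
  also have "\<dots> \<le> real l ^ 2"
    using assms by (simp add: power2_eq_square mult_mono)
  finally show ?thesis .
qed (use assms in \<open>simp add: H_mat_def H_entry_def\<close>)

lemma norm_scalar_add_smult_kac_mat_entry_le:
  assumes "i < l" "j < l"
  shows "norm ((lam \<cdot>\<^sub>m 1\<^sub>m l + mu \<cdot>\<^sub>m kac_mat l) $$ (i, j)) \<le> (real l + 1) * (norm lam + norm mu)"
proof -
  have "(lam \<cdot>\<^sub>m 1\<^sub>m l + mu \<cdot>\<^sub>m kac_mat l) $$ (i, j) = (if i = j then lam else 0) + mu * kac_mat l $$ (i, j)"
    using assms by simp
  also have "norm \<dots> \<le> norm lam + norm mu * norm (kac_mat l $$ (i, j))"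
    by (rule norm_triangle_le) (simp add: norm_mult)
  also have "\<dots> \<le> norm lam + norm mu * real l"
    using norm_kac_mat_entry_le[OF assms] by (simp add: mult_left_mono)
  also have "\<dots> \<le> (real l + 1) * (norm lam + norm mu)"
    by (simp add: algebra_simps mult_right_mono)
  finally show ?thesis .
qed

lemma det_H_mat_sub_leading_form_bound:
  "\<exists>C. \<forall>lam mu. 1 \<le> norm lam + norm mu \<longrightarrow>
     norm (det (H_mat l mu + lam \<cdot>\<^sub>m 1\<^sub>m l) - (\<Prod>k<l. lam - kac_eig l k * mu))
       \<le> C * (norm lam + norm mu) ^ (l - 1)"
proof -
  define K where "K = (real l + 1) ^ 2"
  have l_le_K: "real l + 1 \<le> K"
    using mult_left_mono[of 1 "real l + 1" "real l + 1"] by (simp add: K_def power2_eq_square)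
  have "norm (det (H_mat l mu + lam \<cdot>\<^sub>m 1\<^sub>m l) - (\<Prod>k<l. lam - kac_eig l k * mu))
      \<le> (fact l * real l * K * (2 * K) ^ (l - 1)) * (norm lam + norm mu) ^ (l - 1)"
    if N: "1 \<le> norm lam + norm mu" for lam mu :: complex
  proof -
    define N where "N = norm lam + norm mu"
    have bound_X: "norm ((lam \<cdot>\<^sub>m 1\<^sub>m l + mu \<cdot>\<^sub>m kac_mat l) $$ (i, j)) \<le> (real l + 1) * N"
      if "i < l" "j < l" for i j
      using norm_scalar_add_smult_kac_mat_entry_le[OF that] unfolding N_def .
    have bound_D: "norm (H_mat l 0 $$ (i, j)) \<le> K" if "i < l" "j < l" for i j
      using norm_H_mat_0_entry_le[OF that] power_mono[of "real l" "real l + 1" 2]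
      unfolding K_def by linarith
    have "norm (det (H_mat l mu + lam \<cdot>\<^sub>m 1\<^sub>m l) - (\<Prod>k<l. lam - kac_eig l k * mu))
        \<le> fact l * (real l * K * ((real l + 1) * N + K) ^ (l - 1))"
      unfolding H_mat_add_scalar_eq det_scalar_add_smult_kac_mat[symmetric]
      by (rule norm_det_add_diff_le[OF _ _ bound_X bound_D]) auto
    also have "\<dots> \<le> fact l * (real l * K * (2 * K * N) ^ (l - 1))"
    proof -
      have "(real l + 1) * N \<le> K * N" and "K \<le> K * N"
        using l_le_K N mult_left_mono[of 1 N K] unfolding N_def K_def by (auto intro: mult_right_mono)
      then have "(real l + 1) * N + K \<le> 2 * K * N"
        by simp
      then show ?thesis
        using N unfolding N_def K_def by (intro mult_left_mono power_mono) auto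
    qed
    also have "\<dots> = (fact l * real l * K * (2 * K) ^ (l - 1)) * N ^ (l - 1)"
      by (simp add: power_mult_distrib mult_ac)
    finally show ?thesis
      by (simp only: N_def)
  qed
  then show ?thesis
    by blast
qed

lemma Gamma_0: "Gamma 0 = {}"
proof -
  have "H_mat 0 mu + lam \<cdot>\<^sub>m 1\<^sub>m 0 = 1\<^sub>m 0" for lam mu
    by (rule eq_matI) auto
  then show ?thesis
    by (simp add: Gamma_def)
qed

lemma norm_direction_gap_le:
  fixes a b c lam mu :: complex
  shows "norm (a - c * b) * (norm lam + norm mu)
         \<le> (norm a + norm b) * norm (lam - c * mu) + (norm c + 1) * norm (a * mu - b * lam)"
proof -
  have "norm (a - c * b) * norm lam = norm (a * (lam - c * mu) + c * (a * mu - b * lam))"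
    by (simp add: norm_mult[symmetric] algebra_simps)
  also have "\<dots> \<le> norm a * norm (lam - c * mu) + norm c * norm (a * mu - b * lam)"
    by (rule norm_triangle_le) (simp add: norm_mult)
  finally have lam: "norm (a - c * b) * norm lam \<le> \<dots>" .
  have "norm (a - c * b) * norm mu = norm (b * (lam - c * mu) + (a * mu - b * lam))"
    by (simp add: norm_mult[symmetric] algebra_simps)
  also have "\<dots> \<le> norm b * norm (lam - c * mu) + norm (a * mu - b * lam)"
    by (rule norm_triangle_le) (simp add: norm_mult)
  finally have mu: "norm (a - c * b) * norm mu \<le> \<dots>" .
  show ?thesis
    using lam mu by (simp add: algebra_simps)
qed

lemma eventually_factor_lower_bound:
  fixes lam mu :: "nat \<Rightarrow> complex"
  defines "N \<equiv> \<lambda>n. norm (lam n) + norm (mu n)"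
  assumes direction: "(\<lambda>n. (a * mu n - b * lam n) / of_real (N n)) \<longlonglongrightarrow> 0"
    and gap: "a - c * b \<noteq> 0"
  shows "\<forall>\<^sub>F n in sequentially. norm (a - c * b) / (2 * (norm a + norm b)) * N n \<le> norm (lam n - c * mu n)"
proof -
  define \<epsilon> where "\<epsilon> = norm (a - c * b) / (2 * (norm c + 1))"
  have "a \<noteq> 0 \<or> b \<noteq> 0"
    using gap by auto
  then have S: "0 < norm a + norm b"
    by (auto simp: add_pos_nonneg add_nonneg_pos)
  have "0 < \<epsilon>"
    using gap unfolding \<epsilon>_def by (simp add: add_nonneg_pos)
  with direction have "\<forall>\<^sub>F n in sequentially. norm ((a * mu n - b * lam n) / of_real (N n)) < \<epsilon>"
    by (auto dest: tendstoD simp: dist_norm)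
  then show ?thesis
  proof (rule eventually_mono)
    fix n
    assume small: "norm ((a * mu n - b * lam n) / of_real (N n)) < \<epsilon>"
    have "norm (a * mu n - b * lam n) \<le> \<epsilon> * N n"
    proof (cases "N n = 0")
      case True
      then show ?thesis
        unfolding N_def by (simp add: add_nonneg_eq_0_iff)
    next
      case False
      then have "0 < N n"
        unfolding N_def by (simp add: order_le_neq_trans)
      with small show ?thesis
        by (simp add: norm_divide divide_less_eq)
    qed
    then have "(norm c + 1) * norm (a * mu n - b * lam n) \<le> (norm c + 1) * (\<epsilon> * N n)"
      by (simp add: mult_left_mono)
    also have "\<dots> = norm (a - c * b) * N n / 2"
    proof -
      have "norm c + 1 \<noteq> 0"
        using norm_ge_zero[of c] by linarith
      moreover have "u * (x / (2 * u) * y) = x * y / 2" if "u \<noteq> 0" for u x y :: real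
        using that by (simp add: field_simps)
      ultimately show ?thesis
        unfolding \<epsilon>_def by blast
    qed
    finally have "norm (a - c * b) * N n
        \<le> (norm a + norm b) * norm (lam n - c * mu n) + norm (a - c * b) * N n / 2"
      using norm_direction_gap_le[of a c b "lam n" "mu n"] unfolding N_def by linarith
    then show "norm (a - c * b) / (2 * (norm a + norm b)) * N n \<le> norm (lam n - c * mu n)"
      using S by (simp add: field_simps)
  qed
qed

lemma eventually_prod_factors_lower_bound:
  fixes lam mu c :: "nat \<Rightarrow> complex"
  defines "N \<equiv> \<lambda>n. norm (lam n) + norm (mu n)"
  assumes direction: "(\<lambda>n. (a * mu n - b * lam n) / of_real (N n)) \<longlonglongrightarrow> 0"
    and gap: "\<And>k. k < l \<Longrightarrow> a - c k * b \<noteq> 0"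
  obtains P where "0 < P" and "\<forall>\<^sub>F n in sequentially. P * N n ^ l \<le> norm (\<Prod>k<l. lam n - c k * mu n)"
proof -
  define \<delta> where "\<delta> k = norm (a - c k * b) / (2 * (norm a + norm b))" for k
  have \<delta>_pos: "0 < \<delta> k" if "k < l" for k
  proof -
    have "a \<noteq> 0 \<or> b \<noteq> 0"
      using gap[OF that] by auto
    then show ?thesis
      using gap[OF that] unfolding \<delta>_def by (auto simp: add_pos_nonneg add_nonneg_pos)
  qed
  have "\<forall>\<^sub>F n in sequentially. \<forall>k\<in>{..<l}. \<delta> k * N n \<le> norm (lam n - c k * mu n)"
    using direction gap unfolding \<delta>_def N_def
    by (intro eventually_ball_finite ballI eventually_factor_lower_bound) auto
  then have "\<forall>\<^sub>F n in sequentially. (\<Prod>k<l. \<delta> k) * N n ^ l \<le> norm (\<Prod>k<l. lam n - c k * mu n)"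
  proof (rule eventually_mono)
    fix n
    assume "\<forall>k\<in>{..<l}. \<delta> k * N n \<le> norm (lam n - c k * mu n)"
    then have "(\<Prod>k<l. \<delta> k * N n) \<le> (\<Prod>k<l. norm (lam n - c k * mu n))"
      using \<delta>_pos unfolding N_def by (intro prod_mono) (simp add: less_imp_le)
    then show "(\<Prod>k<l. \<delta> k) * N n ^ l \<le> norm (\<Prod>k<l. lam n - c k * mu n)"
      by (simp add: prod.distrib prod_norm)
  qed
  moreover have "0 < (\<Prod>k<l. \<delta> k)"
    using \<delta>_pos by (intro prod_pos) auto
  ultimately show ?thesis
    using that by blast
qed

lemma leading_form_eq_0_if_in_closure_at_infinity:
  assumes "in_closure_at_infinity (Gamma l) a b"
  shows "(\<Prod>k<l. a - kac_eig l k * b) = 0"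
proof (rule ccontr)
  assume "(\<Prod>k<l. a - kac_eig l k * b) \<noteq> 0"
  then have gap: "a - kac_eig l k * b \<noteq> 0" if "k < l" for k
    using that by auto
  obtain x where on_curve: "\<And>n. x n \<in> Gamma l"
    and unbounded: "filterlim (\<lambda>n. norm (fst (x n)) + norm (snd (x n))) at_top sequentially"
    and direction: "(\<lambda>n. (a * snd (x n) - b * fst (x n)) / of_real (norm (fst (x n)) + norm (snd (x n))))
                      \<longlonglongrightarrow> 0"
    using assms unfolding in_closure_at_infinity_def by blast
  define lam mu N where "lam n = fst (x n)" and "mu n = snd (x n)" and "N n = norm (lam n) + norm (mu n)" for n
  have "0 < l"
    using on_curve[of 0] Gamma_0 by (cases l) auto
  obtain C where C: "\<And>lam mu. 1 \<le> norm lam + norm mu \<Longrightarrow>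
      norm (det (H_mat l mu + lam \<cdot>\<^sub>m 1\<^sub>m l) - (\<Prod>k<l. lam - kac_eig l k * mu))
        \<le> C * (norm lam + norm mu) ^ (l - 1)"
    using det_H_mat_sub_leading_form_bound by blast
  obtain P where "0 < P"
    and lower: "\<forall>\<^sub>F n in sequentially. P * N n ^ l \<le> norm (\<Prod>k<l. lam n - kac_eig l k * mu n)"
    using direction gap unfolding lam_def mu_def N_def by (rule eventually_prod_factors_lower_bound)
  have "\<forall>\<^sub>F n in sequentially. max 1 (C / P + 1) \<le> N n"
    using unbounded unfolding filterlim_at_top N_def lam_def mu_def by blast
  with lower have "\<forall>\<^sub>F n in sequentially.
      P * N n ^ l \<le> norm (\<Prod>k<l. lam n - kac_eig l k * mu n) \<and> max 1 (C / P + 1) \<le> N n"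
    by (rule eventually_conj)
  then obtain n where lower: "P * N n ^ l \<le> norm (\<Prod>k<l. lam n - kac_eig l k * mu n)"
    and large: "max 1 (C / P + 1) \<le> N n"
    unfolding eventually_sequentially by blast
  have "P * N n * N n ^ (l - 1) = P * N n ^ l"
    using \<open>0 < l\<close> by (cases l) simp_all
  also have "\<dots> \<le> norm (det (H_mat l (mu n) + lam n \<cdot>\<^sub>m 1\<^sub>m l) - (\<Prod>k<l. lam n - kac_eig l k * mu n))"
    using lower on_curve[of n] by (simp add: Gamma_def lam_def mu_def case_prod_beta)
  also have "\<dots> \<le> C * N n ^ (l - 1)"
    using C large unfolding N_def by simp
  finally have "P * N n \<le> C"
    using large by (simp add: mult_le_cancel_right)
  moreover have "C + P \<le> P * N n"
    using large \<open>0 < P\<close> by (simp add: field_simps)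
  ultimately show False
    using \<open>0 < P\<close> by simp
qed

lemma exists_root_near_kac_line:
  assumes "k < l"
  shows "\<exists>C. \<forall>mu. 1 \<le> norm mu \<longrightarrow>
           (\<exists>r. det (H_mat l mu + r \<cdot>\<^sub>m 1\<^sub>m l) = 0 \<and> norm (kac_eig l k * mu - r) ^ l \<le> C * norm mu ^ (l - 1))"
proof -
  define c where "c = kac_eig l k"
  have l_pos: "0 < l"
    using \<open>k < l\<close> by simp
  obtain C where C: "\<And>lam mu. 1 \<le> norm lam + norm mu \<Longrightarrow>
      norm (det (H_mat l mu + lam \<cdot>\<^sub>m 1\<^sub>m l) - (\<Prod>k<l. lam - kac_eig l k * mu))
        \<le> C * (norm lam + norm mu) ^ (l - 1)"
    using det_H_mat_sub_leading_form_bound by blast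
  have "\<exists>r. det (H_mat l mu + r \<cdot>\<^sub>m 1\<^sub>m l) = 0 \<and>
          norm (c * mu - r) ^ l \<le> (C * (norm c + 1) ^ (l - 1)) * norm mu ^ (l - 1)"
    if mu: "1 \<le> norm mu" for mu
  proof -
    obtain r where root: "det (H_mat l mu + r \<cdot>\<^sub>m 1\<^sub>m l) = 0"
      and near: "norm (c * mu - r) ^ l \<le> norm (det (H_mat l mu + (c * mu) \<cdot>\<^sub>m 1\<^sub>m l))"
      by (rule exists_root_det_add_scalar_near[OF H_mat_carrier l_pos])
    have leading_0: "(\<Prod>k<l. c * mu - kac_eig l k * mu) = 0"
      using \<open>k < l\<close> by (intro prod_zero bexI[of _ k]) (simp_all add: c_def)
    have "1 \<le> norm (c * mu) + norm mu"
      using mu norm_ge_zero[of "c * mu"] by linarith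
    from C[OF this] have "norm (det (H_mat l mu + (c * mu) \<cdot>\<^sub>m 1\<^sub>m l)) \<le> C * (norm (c * mu) + norm mu) ^ (l - 1)"
      unfolding leading_0 by simp
    also have "\<dots> = (C * (norm c + 1) ^ (l - 1)) * norm mu ^ (l - 1)"
      by (simp add: norm_mult power_mult_distrib[symmetric] algebra_simps)
    finally show ?thesis
      using root near by (intro exI[of _ r]) simp
  qed
  then show ?thesis
    unfolding c_def by blast
qed

lemma LIMSEQ_zero_if_power_le_inverse:
  fixes e :: "nat \<Rightarrow> real"
  assumes "0 < l" and nonneg: "\<And>n. 0 \<le> e n" and bound: "\<And>n. e n ^ l \<le> C / real (Suc n)"
  shows "e \<longlonglongrightarrow> 0"
proof -
  have "(\<lambda>n. root l (C / real (Suc n))) \<longlonglongrightarrow> 0"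
    using tendsto_real_root[OF tendsto_mult_right_zero[OF LIMSEQ_inverse_real_of_nat], of l C]
    by (simp add: divide_inverse)
  then show ?thesis
  proof (rule tendsto_0_le[where K = 1])
    show "\<forall>\<^sub>F n in sequentially. norm (e n) \<le> norm (root l (C / real (Suc n))) * 1"
    proof (intro always_eventually allI)
      fix n
      have "e n = root l (e n ^ l)"
        using \<open>0 < l\<close> nonneg by (simp add: real_root_power_cancel)
      also have "\<dots> \<le> root l (C / real (Suc n))"
        using \<open>0 < l\<close> bound by (rule real_root_le_mono)
      finally show "norm (e n) \<le> norm (root l (C / real (Suc n))) * 1"
        using nonneg[of n] by simp
    qed
  qed
qed

lemma in_closure_at_infinity_if_along_integers:
  assumes on_S: "\<And>n. (r n, of_nat (Suc n)) \<in> S"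
    and direction: "(\<lambda>n. norm (a * of_nat (Suc n) - b * r n) / real (Suc n)) \<longlonglongrightarrow> 0"
  shows "in_closure_at_infinity S a b"
proof -
  define x where "x n = (r n, of_nat (Suc n) :: complex)" for n
  define N where "N n = norm (r n) + real (Suc n)" for n
  have N: "norm (fst (x n)) + norm (snd (x n)) = N n" for n
    unfolding x_def N_def by (simp only: fst_conv snd_conv norm_of_nat)
  have Suc_le_N: "real (Suc n) \<le> N n" for n
    unfolding N_def by simp
  show ?thesis
    unfolding in_closure_at_infinity_def
  proof (intro exI[of _ x] conjI allI)
    show "x n \<in> S" for n
      unfolding x_def by (rule on_S)
    have "real n \<le> N n" for n
      using Suc_le_N[of n] by simp
    then show "filterlim (\<lambda>n. norm (fst (x n)) + norm (snd (x n))) at_top sequentially"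
      unfolding N by (intro filterlim_at_top_mono[OF filterlim_real_sequentially] always_eventually allI)
    have "norm ((a * snd (x n) - b * fst (x n)) / of_real (N n))
        \<le> norm (norm (a * of_nat (Suc n) - b * r n) / real (Suc n)) * 1" for n
    proof -
      have "norm ((a * snd (x n) - b * fst (x n)) / of_real (N n)) = norm (a * of_nat (Suc n) - b * r n) / N n"
        using Suc_le_N[of n] by (simp add: x_def norm_divide)
      also have "\<dots> \<le> norm (a * of_nat (Suc n) - b * r n) / real (Suc n)"
        using Suc_le_N[of n] by (intro divide_left_mono) auto
      finally show ?thesis
        by simp
    qed
    then show "(\<lambda>n. (a * snd (x n) - b * fst (x n)) / of_real (norm (fst (x n)) + norm (snd (x n)))) \<longlonglongrightarrow> 0"
      unfolding N by (intro tendsto_0_le[OF direction, where K = 1] always_eventually allI)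
  qed
qed

lemma in_closure_at_infinity_if_kac_direction:
  assumes "k < l" and a: "a = kac_eig l k * b"
  shows "in_closure_at_infinity (Gamma l) a b"
proof -
  obtain C where C: "\<And>mu. 1 \<le> norm mu \<Longrightarrow> \<exists>r. det (H_mat l mu + r \<cdot>\<^sub>m 1\<^sub>m l) = 0 \<and>
                         norm (kac_eig l k * mu - r) ^ l \<le> C * norm mu ^ (l - 1)"
    using exists_root_near_kac_line[OF \<open>k < l\<close>] by blast
  have "\<forall>n. \<exists>r. det (H_mat l (of_nat (Suc n)) + r \<cdot>\<^sub>m 1\<^sub>m l) = 0 \<and>
          norm (kac_eig l k * of_nat (Suc n) - r) ^ l \<le> C * real (Suc n) ^ (l - 1)"
  proof
    fix n
    have "1 \<le> norm (of_nat (Suc n) :: complex)"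
      unfolding norm_of_nat by simp
    from C[OF this] show "\<exists>r. det (H_mat l (of_nat (Suc n)) + r \<cdot>\<^sub>m 1\<^sub>m l) = 0 \<and>
        norm (kac_eig l k * of_nat (Suc n) - r) ^ l \<le> C * real (Suc n) ^ (l - 1)"
      by (simp only: norm_of_nat)
  qed
  from choice[OF this] obtain r where r: "\<forall>n. det (H_mat l (of_nat (Suc n)) + r n \<cdot>\<^sub>m 1\<^sub>m l) = 0 \<and>
      norm (kac_eig l k * of_nat (Suc n) - r n) ^ l \<le> C * real (Suc n) ^ (l - 1)"
    by blast
  define e where "e n = norm (kac_eig l k * of_nat (Suc n) - r n) / real (Suc n)" for n
  have "e n ^ l \<le> C / real (Suc n)" for n
  proof -
    have "e n ^ l \<le> C * real (Suc n) ^ (l - 1) / real (Suc n) ^ l"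
      using r unfolding e_def power_divide by (intro divide_right_mono) auto
    also have "\<dots> = C / real (Suc n)"
      using \<open>k < l\<close> by (cases l) simp_all
    finally show ?thesis .
  qed
  then have "e \<longlonglongrightarrow> 0"
    using \<open>k < l\<close> by (intro LIMSEQ_zero_if_power_le_inverse[of l]) (auto simp: e_def)
  then have "(\<lambda>n. norm b * e n) \<longlonglongrightarrow> 0"
    by (rule tendsto_mult_right_zero)
  moreover have "norm (a * of_nat (Suc n) - b * r n) / real (Suc n) = norm b * e n" for n
    unfolding a e_def by (simp add: norm_mult[symmetric] algebra_simps)
  ultimately show ?thesis
    using r by (intro in_closure_at_infinity_if_along_integers[where r = r]) (auto simp: Gamma_def)
qed

lemma kac_leading_form_eq_0_iff:
  assumes "(a, b) \<noteq> (0, 0)"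
  shows "(\<Prod>k<l. a - kac_eig l k * b) = 0 \<longleftrightarrow> b \<noteq> 0 \<and> (\<exists>k<l. a / b = kac_eig l k)"
proof (cases "b = 0")
  case True
  then show ?thesis
    using assms by simp
next
  case False
  then have "a - kac_eig l k * b = 0 \<longleftrightarrow> a / b = kac_eig l k" for k
    by (auto simp: field_simps)
  then show ?thesis
    using False by auto
qed

theorem proposition1p10:
  fixes l :: nat
  shows "(\<forall>a b :: complex. (a, b) \<noteq> (0, 0) \<longrightarrow>
            (in_closure_at_infinity (Gamma l) a b \<longleftrightarrow>
               b \<noteq> 0 \<and> (\<exists>k<l. a / b = of_int (int l - 1 - 2 * int k))))
         \<and> \<not> in_closure_at_infinity (Gamma l) 1 0"
proof -
  have closure_iff: "in_closure_at_infinity (Gamma l) a b \<longleftrightarrow> b \<noteq> 0 \<and> (\<exists>k<l. a / b = kac_eig l k)"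
    if "(a, b) \<noteq> (0, 0)" for a b :: complex
  proof
    assume "in_closure_at_infinity (Gamma l) a b"
    then show "b \<noteq> 0 \<and> (\<exists>k<l. a / b = kac_eig l k)"
      using leading_form_eq_0_if_in_closure_at_infinity kac_leading_form_eq_0_iff[OF that] by blast
  next
    assume "b \<noteq> 0 \<and> (\<exists>k<l. a / b = kac_eig l k)"
    then obtain k where "k < l" "a = kac_eig l k * b"
      by (auto simp: field_simps)
    then show "in_closure_at_infinity (Gamma l) a b"
      by (rule in_closure_at_infinity_if_kac_direction)
  qed
  show ?thesis
    using closure_iff[of 1 0] closure_iff by (simp add: kac_eig_def)
qed

end
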